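(* Consider the clock protocol (defined in the context) run by a population of $n$ agents with a fixed constant drip probability $p\in(0,1]$. Fix a minute index $i\ge 0$. With very high probability, for all times $t$ of the execution: if $n^{-0.45}\le c_{\ge i}(t)\le 0.1$, then $$c_{\ge i+1}(t)\le 0.9\,p\,c_{\ge i}(t)^2+d_{\ge i+1}(t).$$
   Context: Clock protocol: $n$ agents, each with an integer field $\mathtt{minute}$, initially $0$. At each step an ordered pair of distinct agents is chosen uniformly at random to interact; parallel time $t$ corresponds to $tn$ interactions. Transitions: (drip) if both agents have $\mathtt{minute}=i$, then with probability $p$ one of them moves to $\mathtt{minute}=i+1$ (i.e. $i,i\to i,i+1$); (epidemic) if the agents have minutes $j>k$, the agent with minute $k$ sets its minute to $j$ (i.e. $j,k\to j,j$). For a minute $i$ and time $t$, $c_{\ge i}(t)$ is the fraction of agents with $\mathtt{minute}\ge i$ at time $t$. The set of early drip agents $D_{\ge i+1}(t)$ consists of the agents that, at some time $\le t$, moved above minute $i$ via a drip reaction occurring at a time $s$ with $c_{\ge i}(s)<n^{-0.45}$, together with agents that were brought above minute $i$ (at a time $\le t$) via an epidemic reaction with another early drip agent; $d_{\ge i+1}(t)=|D_{\ge i+1}(t)|/n$. "With very high probability" means with probability $1-n^{-\omega(1)}$ as $n\to\infty$ ($p$ fixed); the execution is considered over polynomially many (in $n$) minutes. *)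

theory Defs
  imports "HOL-Probability.Probability"
begin

text \<open>Agents are 0..n-1. A configuration is a pair (m, D): m a is the minute of agent a,
  D a says whether agent a belongs to the early-drip set D_{>= i+1} (for the fixed minute i).\<close>

type_synonym config = "(nat \<Rightarrow> nat) \<times> (nat \<Rightarrow> bool)"

definition agent_pairs :: "nat \<Rightarrow> (nat \<times> nat) set" where
  "agent_pairs n = {(u, v). u < n \<and> v < n \<and> u \<noteq> v}"

definition c_ge :: "nat \<Rightarrow> (nat \<Rightarrow> nat) \<Rightarrow> nat \<Rightarrow> real" where
  "c_ge n m i = real (card {a. a < n \<and> i \<le> m a}) / real n"

definition d_frac :: "nat \<Rightarrow> (nat \<Rightarrow> bool) \<Rightarrow> real" where
  "d_frac n D = real (card {a. a < n \<and> D a}) / real n"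

definition clock_step :: "nat \<Rightarrow> real \<Rightarrow> nat \<Rightarrow> config \<Rightarrow> config pmf" where
  "clock_step n p i s = (case s of (m, D) \<Rightarrow>
     do { (u, v) \<leftarrow> pmf_of_set (agent_pairs n);
          if m u = m v then
            do { b \<leftarrow> bernoulli_pmf p;
                 return_pmf (if b then
                    (m(v := Suc (m v)),
                     if m v = i \<and> c_ge n m i < real n powr (-0.45) then D(v := True) else D)
                  else (m, D)) }
          else if m v < m u then
            return_pmf (m(v := m u),
                        if m v \<le> i \<and> i < m u \<and> D u then D(v := True) else D)
          else
            return_pmf (m(u := m v),
                        if m u \<le> i \<and> i < m v \<and> D v then D(u := True) else D) })"

definition clock_init :: config where
  "clock_init = ((\<lambda>_. 0), (\<lambda>_. False))"

text \<open>Distribution of the trajectory of the first k interactions (list of k+1 configurations,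
  entry t is the configuration after t interactions).\<close>
fun clock_run :: "nat \<Rightarrow> real \<Rightarrow> nat \<Rightarrow> nat \<Rightarrow> config list pmf" where
  "clock_run n p i 0 = return_pmf [clock_init]"
| "clock_run n p i (Suc k) =
     do { xs \<leftarrow> clock_run n p i k;
          s' \<leftarrow> clock_step n p i (last xs);
          return_pmf (xs @ [s']) }"

definition clock_bad :: "nat \<Rightarrow> real \<Rightarrow> nat \<Rightarrow> config \<Rightarrow> bool" where
  "clock_bad n p i s = (case s of (m, D) \<Rightarrow>
     real n powr (-0.45) \<le> c_ge n m i \<and> c_ge n m i \<le> 0.1 \<and>
     \<not> (c_ge n m (Suc i) \<le> 0.9 * p * (c_ge n m i)\<^sup>2 + d_frac n D))"

end

(*
  Write Y for the number of agents with minute at least i and X for the number of agents above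
  minute i that are not early drip agents. Every agent above minute i + 1 is counted by X or by
  d, so a violation of the bound forces X > 0.9 p Y^2 / n while c_{>=i} lies in the window
  [n^-0.45, 0.1]. In the window, X grows by at most (p Y^2 + 2 X n) / n^2 per interaction in
  expectation while Y grows by 2 Y (n - Y) / n^2, so as long as X <= 0.9 p Y^2 / n the quadratic
  term wins and exp ((X - 0.9 p Y^2 / n) / 10) is a supermartingale. Truncating it to 0 above
  the window and freezing Y at n^0.55 below it (where X = 0, since every agent above minute i is
  then an early drip agent) extends this to the whole execution. Stopped at the first excess,
  Ville's argument bounds the probability of an excess, at any time and for any number of
  interactions, by the initial value exp (-0.09 p n^0.1).
*)
theory Submission
  imports Defs "HOL-Real_Asymp.Real_Asymp"
begin

definition count_ge :: "nat \<Rightarrow> (nat \<Rightarrow> nat) \<Rightarrow> nat \<Rightarrow> real" where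
  "count_ge n m i = real (card {a. a < n \<and> i \<le> m a})"

definition count_nondrip :: "nat \<Rightarrow> (nat \<Rightarrow> nat) \<Rightarrow> (nat \<Rightarrow> bool) \<Rightarrow> nat \<Rightarrow> real" where
  "count_nondrip n m D i = real (card {a. a < n \<and> i < m a \<and> \<not> D a})"

lemma c_ge_eq_count_ge: "c_ge n m i = count_ge n m i / real n"
  by (simp add: c_ge_def count_ge_def)

lemma count_ge_nonneg: "0 \<le> count_ge n m i"
  by (simp add: count_ge_def)

lemma real_card_eq_sum_of_bool:
  fixes n :: nat
  shows "real (card {a. a < n \<and> P a}) = (\<Sum>a<n. of_bool (P a))"
proof -
  have "{a. a < n \<and> P a} = {..<n} \<inter> {a. P a}" by auto
  moreover have "(\<Sum>a<n. of_bool (P a)) = real (card ({..<n} \<inter> {a. P a}))"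
    using sum_of_bool_eq[of "{..<n}" P] by simp
  ultimately show ?thesis by simp
qed

lemma real_card_update:
  fixes l n :: nat
  assumes "l < n" and "\<And>a. a \<noteq> l \<Longrightarrow> Q a = P a"
  shows "real (card {a. a < n \<and> Q a})
           = real (card {a. a < n \<and> P a}) - of_bool (P l) + of_bool (Q l)"
proof -
  have l: "l \<in> {..<n}" using assms(1) by simp
  have rest: "(\<Sum>a\<in>{..<n} - {l}. of_bool (Q a)) = (\<Sum>a\<in>{..<n} - {l}. (of_bool (P a) :: real))"
    using assms(2) by (intro sum.cong) auto
  show ?thesis
    unfolding real_card_eq_sum_of_bool sum.remove[OF finite_lessThan l] rest by simp
qed

lemma count_ge_drip:
  assumes "v < n"
  shows "count_ge n (m(v := Suc (m v))) i = count_ge n m i + of_bool (Suc (m v) = i)"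
  unfolding count_ge_def
  by (subst real_card_update[OF assms, where P = "\<lambda>a. i \<le> m a"]) auto

lemma count_nondrip_drip:
  assumes "v < n"
  shows "count_nondrip n (m(v := Suc (m v))) (if m v = i \<and> b then D(v := True) else D) i
           = count_nondrip n m D i + of_bool (m v = i \<and> \<not> b \<and> \<not> D v)"
  unfolding count_nondrip_def
  by (subst real_card_update[OF assms, where P = "\<lambda>a. i < m a \<and> \<not> D a"]) auto

lemma count_ge_epidemic:
  assumes "l < n" and "m l < m w"
  shows "count_ge n (m(l := m w)) i = count_ge n m i + of_bool (m l < i \<and> i \<le> m w)"
  unfolding count_ge_def
  by (subst real_card_update[OF assms(1), where P = "\<lambda>a. i \<le> m a"]) (use assms(2) in auto)

lemma count_nondrip_epidemic:
  assumes "l < n" and "m l < m w"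
  shows "count_nondrip n (m(l := m w)) (if m l \<le> i \<and> i < m w \<and> D w then D(l := True) else D) i
           = count_nondrip n m D i + of_bool (m l \<le> i \<and> i < m w \<and> \<not> D w \<and> \<not> D l)"
  unfolding count_nondrip_def
  by (subst real_card_update[OF assms(1), where P = "\<lambda>a. i < m a \<and> \<not> D a"])
    (use assms(2) in auto)

definition clock_interact ::
    "nat \<Rightarrow> real \<Rightarrow> nat \<Rightarrow> (nat \<Rightarrow> nat) \<Rightarrow> (nat \<Rightarrow> bool) \<Rightarrow> nat \<Rightarrow> nat \<Rightarrow> config pmf" where
  "clock_interact n p i m D u v =
     (if m u = m v then
        do { b \<leftarrow> bernoulli_pmf p;
             return_pmf (if b then
                (m(v := Suc (m v)),
                 if m v = i \<and> c_ge n m i < real n powr (-0.45) then D(v := True) else D)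
              else (m, D)) }
      else if m v < m u then
        return_pmf (m(v := m u), if m v \<le> i \<and> i < m u \<and> D u then D(v := True) else D)
      else
        return_pmf (m(u := m v), if m u \<le> i \<and> i < m v \<and> D v then D(u := True) else D))"

lemma clock_step_eq_bind:
  "clock_step n p i (m, D) = pmf_of_set (agent_pairs n) \<bind> (\<lambda>(u, v). clock_interact n p i m D u v)"
  unfolding clock_step_def clock_interact_def by simp

lemma agent_pairs_subset: "agent_pairs n \<subseteq> {..<n} \<times> {..<n}"
  by (auto simp: agent_pairs_def)

lemma finite_agent_pairs: "finite (agent_pairs n)"
  using agent_pairs_subset by (rule finite_subset) auto

lemma agent_pairs_nonempty: "2 \<le> n \<Longrightarrow> agent_pairs n \<noteq> {}"
proof -
  assume "2 \<le> n"
  then have "(0, 1) \<in> agent_pairs n" by (simp add: agent_pairs_def)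
  then show ?thesis by blast
qed

lemma set_pmf_clock_interact:
  assumes "s' \<in> set_pmf (clock_interact n p i m D u v)"
  shows "m u = m v \<and> (s' = (m(v := Suc (m v)),
              if m v = i \<and> c_ge n m i < real n powr (-0.45) then D(v := True) else D) \<or> s' = (m, D))
       \<or> m v < m u \<and> s' = (m(v := m u), if m v \<le> i \<and> i < m u \<and> D u then D(v := True) else D)
       \<or> m u < m v \<and> s' = (m(u := m v), if m u \<le> i \<and> i < m v \<and> D v then D(u := True) else D)"
  using assms unfolding clock_interact_def by (auto split: if_splits)

lemma set_pmf_clock_step:
  assumes "s' \<in> set_pmf (clock_step n p i (m, D))" and "2 \<le> n"
  obtains u v where "u < n" "v < n" "u \<noteq> v" "s' \<in> set_pmf (clock_interact n p i m D u v)"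
  using assms agent_pairs_nonempty[OF assms(2)] finite_agent_pairs
  by (auto simp: clock_step_eq_bind agent_pairs_def)

lemma count_ge_interact_mono:
  assumes "u < n" "v < n" and "(m', D') \<in> set_pmf (clock_interact n p i m D u v)"
  shows "count_ge n m i \<le> count_ge n m' i"
  using set_pmf_clock_interact[OF assms(3)] count_ge_drip[OF assms(2), of m i]
    count_ge_epidemic[OF assms(2), of m u i] count_ge_epidemic[OF assms(1), of m v i]
  by auto

lemma c_ge_interact_mono:
  assumes "u < n" "v < n" and "(m', D') \<in> set_pmf (clock_interact n p i m D u v)"
  shows "c_ge n m i \<le> c_ge n m' i"
  unfolding c_ge_eq_count_ge by (intro divide_right_mono count_ge_interact_mono[OF assms]) simp

text \<open>Below the threshold every drip out of minute \<open>i\<close> is early, so no agent outside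
  \<open>D\<close> can get above minute \<open>i\<close>.\<close>
lemma count_nondrip_interact_zero:
  assumes "u < n" "v < n" and "(m', D') \<in> set_pmf (clock_interact n p i m D u v)"
    and "c_ge n m i < real n powr (-0.45)" and "count_nondrip n m D i = 0"
  shows "count_nondrip n m' D' i = 0"
proof -
  have "D w" if "w < n" "i < m w" for w
    using assms(5) that by (auto simp: count_nondrip_def card_eq_0_iff)
  then show ?thesis
    using set_pmf_clock_interact[OF assms(3)] assms(4,5)
      count_nondrip_drip[OF assms(2), of m i "c_ge n m i < real n powr (-0.45)" D]
      count_nondrip_epidemic[OF assms(2), of m u i D] count_nondrip_epidemic[OF assms(1), of m v i D]
      assms(1,2)
    by auto
qed

definition clock_inv :: "nat \<Rightarrow> nat \<Rightarrow> config \<Rightarrow> bool" where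
  "clock_inv n i s = (case s of (m, D) \<Rightarrow>
     c_ge n m i < real n powr (-0.45) \<longrightarrow> count_nondrip n m D i = 0)"

lemma clock_inv_init: "clock_inv n i clock_init"
  by (simp add: clock_inv_def clock_init_def count_nondrip_def)

lemma clock_inv_step:
  assumes "2 \<le> n" and "clock_inv n i (m, D)" and "s' \<in> set_pmf (clock_step n p i (m, D))"
  shows "clock_inv n i s'"
proof -
  obtain m' D' where s': "s' = (m', D')" by fastforce
  obtain u v where uv: "u < n" "v < n" "(m', D') \<in> set_pmf (clock_interact n p i m D u v)"
    using set_pmf_clock_step[OF assms(3)[unfolded s'] assms(1)] by metis
  have "count_nondrip n m' D' i = 0" if "c_ge n m' i < real n powr (-0.45)"
  proof -
    have "c_ge n m i < real n powr (-0.45)"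
      using c_ge_interact_mono[OF uv] that by linarith
    with assms(2) show ?thesis
      by (intro count_nondrip_interact_zero[OF uv]) (auto simp: clock_inv_def)
  qed
  then show ?thesis by (simp add: s' clock_inv_def)
qed

lemma clock_run_inv:
  assumes "2 \<le> n" and "xs \<in> set_pmf (clock_run n p i k)"
  shows "xs \<noteq> [] \<and> clock_inv n i (last xs)"
  using assms(2)
proof (induction k arbitrary: xs)
  case 0
  then show ?case by (simp add: clock_inv_init)
next
  case (Suc k)
  then obtain ys s' where ys: "ys \<in> set_pmf (clock_run n p i k)"
    and s': "s' \<in> set_pmf (clock_step n p i (last ys))" and xs: "xs = ys @ [s']"
    by auto
  obtain m D where "last ys = (m, D)" by fastforce
  then show ?case
    using clock_inv_step[OF assms(1), of i m D s' p] Suc.IH[OF ys] s' xs by auto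
qed

definition potential :: "nat \<Rightarrow> real \<Rightarrow> nat \<Rightarrow> config \<Rightarrow> real" where
  "potential n p i s = (case s of (m, D) \<Rightarrow>
     exp (1/10 * (count_nondrip n m D i - 9/10 * p * (count_ge n m i)\<^sup>2 / real n)))"

text \<open>The truncation vanishes once \<open>c_ge n m i > 1/10\<close>, which is never undone, and bounds
  \<open>count_ge\<close> below by \<open>n powr 0.55\<close> in the quadratic term, so that it is constant below the
  threshold, where \<open>count_nondrip\<close> stays \<open>0\<close>.\<close>
definition trunc_potential :: "nat \<Rightarrow> real \<Rightarrow> nat \<Rightarrow> config \<Rightarrow> real" where
  "trunc_potential n p i s = (case s of (m, D) \<Rightarrow>
     if 1/10 < c_ge n m i then 0
     else exp (1/10 * (count_nondrip n m D i
                       - 9/10 * p * (max (count_ge n m i) (real n powr (-0.45) * real n))\<^sup>2 / real n)))"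

lemma potential_pos: "0 < potential n p i s"
  by (simp add: potential_def split: prod.splits)

lemma trunc_potential_nonneg: "0 \<le> trunc_potential n p i s"
  by (simp add: trunc_potential_def split: prod.splits)

lemma trunc_potential_le_potential:
  assumes "0 < n" and "0 \<le> p"
  shows "trunc_potential n p i s \<le> potential n p i s"
proof -
  obtain m D where s: "s = (m, D)" by fastforce
  have "(count_ge n m i)\<^sup>2 \<le> (max (count_ge n m i) (real n powr (-0.45) * real n))\<^sup>2"
    using count_ge_nonneg by (intro power_mono) auto
  then have "9/10 * p * (count_ge n m i)\<^sup>2 / real n
      \<le> 9/10 * p * (max (count_ge n m i) (real n powr (-0.45) * real n))\<^sup>2 / real n"
    using assms by (intro divide_right_mono mult_left_mono) auto
  then have "1/10 * (count_nondrip n m D i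
                 - 9/10 * p * (max (count_ge n m i) (real n powr (-0.45) * real n))\<^sup>2 / real n)
      \<le> 1/10 * (count_nondrip n m D i - 9/10 * p * (count_ge n m i)\<^sup>2 / real n)"
    by (rule mult_left_mono[OF diff_left_mono]) simp_all
  then have "exp (1/10 * (count_nondrip n m D i
                 - 9/10 * p * (max (count_ge n m i) (real n powr (-0.45) * real n))\<^sup>2 / real n))
      \<le> exp (1/10 * (count_nondrip n m D i - 9/10 * p * (count_ge n m i)\<^sup>2 / real n))"
    by (simp only: exp_le_cancel_iff)
  then show ?thesis by (simp add: s trunc_potential_def potential_def del: exp_le_cancel_iff)
qed

lemma trunc_potential_eq_potential:
  assumes "0 < n" and "real n powr (-0.45) \<le> c_ge n m i" and "c_ge n m i \<le> 1/10"
  shows "trunc_potential n p i (m, D) = potential n p i (m, D)"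
proof -
  have "real n powr (-0.45) * real n \<le> count_ge n m i"
    using assms by (simp add: c_ge_eq_count_ge field_simps)
  then show ?thesis using assms(3) by (simp add: trunc_potential_def potential_def max_def)
qed

text \<open>A unit increment of \<open>X\<close> costs at most the factor \<open>1 + (exp l - 1) w\<close>, one of \<open>Y\<close> gains
  at least the factor \<open>exp (- 2 l a Y / n)\<close>, and \<open>(1 + \<alpha> d) (1 - \<beta> e) \<le> 1 + \<alpha> d - \<beta> e\<close>.\<close>
lemma exp_increment_le:
  fixes X Y a l n w :: real
  assumes "0 \<le> Y" "0 < n" "0 \<le> a" "0 \<le> l" and "of_bool d \<le> w"
  shows "exp (l * (X + of_bool d - a * (Y + of_bool e)\<^sup>2 / n))
           \<le> exp (l * (X - a * Y\<^sup>2 / n))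
             * (1 + (exp l - 1) * w - (1 - exp (- (l * (2 * a * Y / n)))) * of_bool e)"
proof -
  define q where "q = exp (- (l * (2 * a * Y / n)))"
  define gx where "gx = exp (l * of_bool d)"
  define gy where "gy = exp (- (l * a * (2 * Y + 1) / n) * of_bool e)"
  have q: "q \<le> 1" using assms(1-4) by (simp add: q_def zero_le_mult_iff)
  have split: "exp (l * (X + of_bool d - a * (Y + of_bool e)\<^sup>2 / n))
      = exp (l * (X - a * Y\<^sup>2 / n)) * (gx * gy)"
    unfolding gx_def gy_def using assms(2)
    by (cases e) (simp_all add: exp_add[symmetric] field_simps power2_eq_square)
  have gx: "gx \<le> 1 + (exp l - 1) * of_bool d" by (cases d) (simp_all add: gx_def)
  have "l * (2 * a * Y / n) \<le> l * a * (2 * Y + 1) / n"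
    using assms(2-4) by (simp add: field_simps)
  then have gy: "gy \<le> 1 - (1 - q) * of_bool e" by (cases e) (simp_all add: gy_def q_def)
  have "gx * gy \<le> (1 + (exp l - 1) * of_bool d) * (1 - (1 - q) * of_bool e)"
    using gx gy by (intro mult_mono) (auto simp: gx_def gy_def q_def)
  also have "\<dots> = 1 + (exp l - 1) * of_bool d - (1 - q) * of_bool e
                     - (exp l - 1) * of_bool d * ((1 - q) * of_bool e)"
    by (simp add: algebra_simps)
  also have "\<dots> \<le> 1 + (exp l - 1) * w - (1 - q) * of_bool e"
  proof -
    have "0 \<le> exp l - 1" using assms(4) by simp
    moreover from this have "0 \<le> (exp l - 1) * of_bool d * ((1 - q) * of_bool e)"
      using q by simp
    ultimately show ?thesis using mult_left_mono[OF assms(5)] by fastforce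
  qed
  finally show ?thesis unfolding split q_def by (simp add: mult_left_mono)
qed

definition potential_decay :: "nat \<Rightarrow> real \<Rightarrow> nat \<Rightarrow> (nat \<Rightarrow> nat) \<Rightarrow> real" where
  "potential_decay n p i m = 1 - exp (- (1/10 * (2 * (9/10 * p) * count_ge n m i / real n)))"

lemma potential_decay_bounds:
  assumes "0 < n" "0 \<le> p"
  shows "0 \<le> potential_decay n p i m" "potential_decay n p i m \<le> 1"
  using assms count_ge_nonneg[of n m i] by (auto simp: potential_decay_def)

lemma potential_update_le:
  assumes "count_nondrip n m' D' i = count_nondrip n m D i + of_bool d"
    and "count_ge n m' i = count_ge n m i + of_bool e"
    and "of_bool d \<le> w" and "0 < n" "0 \<le> p"
  shows "potential n p i (m', D')
           \<le> potential n p i (m, D)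
             * (1 + (exp (1/10) - 1) * w - potential_decay n p i m * of_bool e)"
  unfolding potential_def potential_decay_def prod.case assms(1,2)
  using exp_increment_le[OF count_ge_nonneg _ _ _ assms(3), where a = "9/10 * p" and l = "1/10"]
    assms(4,5)
  by (simp add: mult.assoc)

lemma trunc_potential_drip_le:
  assumes "v < n" "0 < n" "0 \<le> p" and "real n powr (-0.45) \<le> c_ge n m i"
  shows "trunc_potential n p i
           (m(v := Suc (m v)), if m v = i \<and> c_ge n m i < real n powr (-0.45) then D(v := True) else D)
         \<le> potential n p i (m, D) * (1 + (exp (1/10) - 1) * of_bool (m v = i))"
proof -
  let ?b = "c_ge n m i < real n powr (-0.45)"
  have "trunc_potential n p i (m(v := Suc (m v)), if m v = i \<and> ?b then D(v := True) else D)
      \<le> potential n p i (m(v := Suc (m v)), if m v = i \<and> ?b then D(v := True) else D)"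
    using assms(2,3) by (rule trunc_potential_le_potential)
  also have "\<dots> \<le> potential n p i (m, D) * (1 + (exp (1/10) - 1) * of_bool (m v = i)
                   - potential_decay n p i m * of_bool (Suc (m v) = i))"
    by (rule potential_update_le[OF count_nondrip_drip[OF assms(1)] count_ge_drip[OF assms(1)]])
      (use assms(2,3) in auto)
  also have "\<dots> \<le> potential n p i (m, D) * (1 + (exp (1/10) - 1) * of_bool (m v = i))"
    using potential_decay_bounds[OF assms(2,3)] less_imp_le[OF potential_pos]
    by (intro mult_left_mono) auto
  finally show ?thesis .
qed

lemma trunc_potential_epidemic_le:
  assumes "l < n" "m l < m w" "0 < n" "0 \<le> p"
  shows "trunc_potential n p i (m(l := m w), if m l \<le> i \<and> i < m w \<and> D w then D(l := True) else D)
         \<le> potential n p i (m, D) * (1 + (exp (1/10) - 1) * of_bool (i < m w \<and> \<not> D w)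
              - potential_decay n p i m * of_bool (m l < i \<and> i \<le> m w))"
proof -
  let ?s = "(m(l := m w), if m l \<le> i \<and> i < m w \<and> D w then D(l := True) else D)"
  have "trunc_potential n p i ?s \<le> potential n p i ?s"
    using assms(3,4) by (rule trunc_potential_le_potential)
  also have "\<dots> \<le> potential n p i (m, D) * (1 + (exp (1/10) - 1) * of_bool (i < m w \<and> \<not> D w)
              - potential_decay n p i m * of_bool (m l < i \<and> i \<le> m w))"
    by (rule potential_update_le[OF count_nondrip_epidemic[OF assms(1,2)]
          count_ge_epidemic[OF assms(1,2)]]) (use assms(3,4) in auto)
  finally show ?thesis .
qed

definition nondrip_weight :: "real \<Rightarrow> nat \<Rightarrow> (nat \<Rightarrow> nat) \<Rightarrow> (nat \<Rightarrow> bool) \<Rightarrow> nat \<Rightarrow> nat \<Rightarrow> real" where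
  "nondrip_weight p i m D u v = p * (of_bool (m u = i) * of_bool (m v = i))
     + of_bool (i < m u \<and> \<not> D u) + of_bool (i < m v \<and> \<not> D v)"

definition crossing :: "nat \<Rightarrow> (nat \<Rightarrow> nat) \<Rightarrow> nat \<Rightarrow> nat \<Rightarrow> real" where
  "crossing i m u v = of_bool (i \<le> m u) * of_bool (m v < i) + of_bool (m u < i) * of_bool (i \<le> m v)"

lemma nn_integral_pmf_le_const:
  assumes "\<And>x. x \<in> set_pmf M \<Longrightarrow> f x \<le> c"
  shows "(\<integral>\<^sup>+x. ennreal (f x) \<partial>measure_pmf M) \<le> ennreal c"
proof -
  have "(\<integral>\<^sup>+x. ennreal (f x) \<partial>measure_pmf M) \<le> (\<integral>\<^sup>+x. ennreal c \<partial>measure_pmf M)"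
    by (rule nn_integral_mono_AE) (use assms in \<open>auto simp: AE_measure_pmf_iff intro: ennreal_leI\<close>)
  then show ?thesis by (simp add: measure_pmf.emeasure_space_1)
qed

lemma nn_integral_trunc_potential_interact_le:
  assumes "u < n" "v < n" "0 < p" "p \<le> 1"
    and "real n powr (-0.45) \<le> c_ge n m i" "c_ge n m i \<le> 1/10"
  shows "(\<integral>\<^sup>+ s'. ennreal (trunc_potential n p i s') \<partial>clock_interact n p i m D u v)
     \<le> ennreal (potential n p i (m, D)
         * (1 + (exp (1/10) - 1) * nondrip_weight p i m D u v - potential_decay n p i m * crossing i m u v))"
    (is "?L \<le> ennreal (?P * (1 + ?a * ?W - ?B * ?C))")
proof -
  have n: "0 < n" using assms(1) by simp
  have a: "0 \<le> ?a" by simp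
  have P: "0 < ?P" by (rule potential_pos)
  consider (drip) "m u = m v" | (epidemic) "m v < m u" | (epidemic') "m u < m v"
    by linarith
  then show ?thesis
  proof cases
    case drip
    let ?s = "(m(v := Suc (m v)), if m v = i \<and> c_ge n m i < real n powr (-0.45) then D(v := True) else D)"
    have "?L = ennreal (trunc_potential n p i ?s) * ennreal p + ennreal ?P * ennreal (1 - p)"
      using drip assms(3,4) trunc_potential_eq_potential[OF n assms(5,6)]
      by (simp add: clock_interact_def)
    also have "\<dots> = ennreal (trunc_potential n p i ?s * p + ?P * (1 - p))"
      using assms(3,4) P trunc_potential_nonneg by (simp add: ennreal_mult ennreal_plus)
    also have "\<dots> \<le> ennreal (?P * (1 + ?a * of_bool (m v = i)) * p + ?P * (1 - p))"
      using trunc_potential_drip_le[OF assms(2) n _ assms(5)] assms(3)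
      by (intro ennreal_leI add_right_mono mult_right_mono) auto
    also have "\<dots> = ennreal (?P * (1 + ?a * (p * of_bool (m v = i))))"
      by (simp add: algebra_simps)
    also have "\<dots> \<le> ennreal (?P * (1 + ?a * ?W - ?B * ?C))"
    proof -
      have "p * of_bool (m v = i) \<le> ?W" using drip by (simp add: nondrip_weight_def)
      moreover have "?C = 0" using drip by (auto simp: crossing_def)
      ultimately show ?thesis using a P by (auto intro!: ennreal_leI mult_left_mono)
    qed
    finally show ?thesis .
  next
    case epidemic
    have "?L \<le> ennreal (?P * (1 + ?a * of_bool (i < m u \<and> \<not> D u)
                 - ?B * of_bool (m v < i \<and> i \<le> m u)))"
      using epidemic trunc_potential_epidemic_le[OF assms(2) epidemic n, of p i D] assms(3)
      by (auto simp: clock_interact_def intro: ennreal_leI)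
    also have "\<dots> \<le> ennreal (?P * (1 + ?a * ?W - ?B * ?C))"
      using epidemic a P assms(3)
      by (intro ennreal_leI mult_left_mono) (auto simp: nondrip_weight_def crossing_def)
    finally show ?thesis .
  next
    case epidemic'
    have "?L \<le> ennreal (?P * (1 + ?a * of_bool (i < m v \<and> \<not> D v)
                 - ?B * of_bool (m u < i \<and> i \<le> m v)))"
      using epidemic' trunc_potential_epidemic_le[OF assms(1) epidemic' n, of p i D] assms(3)
      by (auto simp: clock_interact_def intro: ennreal_leI)
    also have "\<dots> \<le> ennreal (?P * (1 + ?a * ?W - ?B * ?C))"
      using epidemic' a P assms(3)
      by (intro ennreal_leI mult_left_mono) (auto simp: nondrip_weight_def crossing_def)
    finally show ?thesis .
  qed
qed

lemma sum_agent_pairs_le: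
  fixes f g :: "nat \<Rightarrow> real"
  assumes "\<And>u. 0 \<le> f u" and "\<And>v. 0 \<le> g v"
  shows "(\<Sum>(u, v)\<in>agent_pairs n. f u * g v) \<le> (\<Sum>u<n. f u) * (\<Sum>v<n. g v)"
proof -
  have "(\<Sum>(u, v)\<in>agent_pairs n. f u * g v) \<le> (\<Sum>(u, v)\<in>{..<n} \<times> {..<n}. f u * g v)"
    using agent_pairs_subset assms by (intro sum_mono2) (auto intro: mult_nonneg_nonneg)
  then show ?thesis by (simp add: sum_product sum.cartesian_product)
qed

lemma sum_agent_pairs_eq:
  fixes f g :: "nat \<Rightarrow> real"
  assumes "\<And>u. f u * g u = 0"
  shows "(\<Sum>(u, v)\<in>agent_pairs n. f u * g v) = (\<Sum>u<n. f u) * (\<Sum>v<n. g v)"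
proof -
  have "(\<Sum>(u, v)\<in>agent_pairs n. f u * g v) = (\<Sum>(u, v)\<in>{..<n} \<times> {..<n}. f u * g v)"
    using agent_pairs_subset assms by (intro sum.mono_neutral_left) (auto simp: agent_pairs_def)
  then show ?thesis by (simp add: sum_product sum.cartesian_product)
qed

lemma sum_nondrip_weight_le:
  assumes "0 \<le> p"
  shows "(\<Sum>(u, v)\<in>agent_pairs n. nondrip_weight p i m D u v)
           \<le> p * (count_ge n m i)\<^sup>2 + 2 * count_nondrip n m D i * real n"
proof -
  let ?X = "\<lambda>u. of_bool (i < m u \<and> \<not> D u) :: real"
  have Y: "(\<Sum>u<n. of_bool (i \<le> m u)) = count_ge n m i"
    by (simp add: count_ge_def real_card_eq_sum_of_bool)
  have X: "(\<Sum>u<n. ?X u) = count_nondrip n m D i"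
    by (simp add: count_nondrip_def real_card_eq_sum_of_bool)
  have "(\<Sum>(u, v)\<in>agent_pairs n. of_bool (m u = i) * (of_bool (m v = i) :: real))
      \<le> (\<Sum>(u, v)\<in>agent_pairs n. of_bool (i \<le> m u) * (of_bool (i \<le> m v) :: real))"
    by (intro sum_mono) auto
  also have "\<dots> \<le> (count_ge n m i)\<^sup>2"
    using sum_agent_pairs_le[of "\<lambda>u. of_bool (i \<le> m u)" "\<lambda>u. of_bool (i \<le> m u)" n]
    by (simp add: Y power2_eq_square)
  finally have drips: "(\<Sum>(u, v)\<in>agent_pairs n. of_bool (m u = i) * (of_bool (m v = i) :: real))
      \<le> (count_ge n m i)\<^sup>2" .
  have first: "(\<Sum>(u, v)\<in>agent_pairs n. ?X u) \<le> count_nondrip n m D i * real n"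
    using sum_agent_pairs_le[of ?X "\<lambda>_. 1" n] by (simp add: X)
  have second: "(\<Sum>(u, v)\<in>agent_pairs n. ?X v) \<le> count_nondrip n m D i * real n"
    using sum_agent_pairs_le[of "\<lambda>_. 1" ?X n] by (simp add: X mult.commute)
  have "(\<Sum>(u, v)\<in>agent_pairs n. nondrip_weight p i m D u v)
      = p * (\<Sum>(u, v)\<in>agent_pairs n. of_bool (m u = i) * (of_bool (m v = i) :: real))
        + (\<Sum>(u, v)\<in>agent_pairs n. ?X u) + (\<Sum>(u, v)\<in>agent_pairs n. ?X v)"
    by (simp add: nondrip_weight_def sum.distrib sum_distrib_left case_prod_beta)
  also have "\<dots> \<le> p * (count_ge n m i)\<^sup>2 + count_nondrip n m D i * real n
                  + count_nondrip n m D i * real n"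
    using drips first second assms by (intro add_mono mult_left_mono) auto
  finally show ?thesis by linarith
qed

lemma sum_crossing_eq:
  "(\<Sum>(u, v)\<in>agent_pairs n. crossing i m u v) = 2 * count_ge n m i * (real n - count_ge n m i)"
proof -
  have Y: "(\<Sum>u<n. of_bool (i \<le> m u)) = count_ge n m i"
    by (simp add: count_ge_def real_card_eq_sum_of_bool)
  have "(\<Sum>u<n. of_bool (m u < i)) = (\<Sum>u<n. 1 - (of_bool (i \<le> m u) :: real))"
    by (intro sum.cong) auto
  then have Y': "(\<Sum>u<n. of_bool (m u < i)) = real n - count_ge n m i"
    by (simp add: sum_subtractf Y)
  show ?thesis
    using sum_agent_pairs_eq[of "\<lambda>u. of_bool (i \<le> m u)" "\<lambda>u. of_bool (m u < i)" n]
      sum_agent_pairs_eq[of "\<lambda>u. of_bool (m u < i)" "\<lambda>u. of_bool (i \<le> m u)" n]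
    by (simp add: crossing_def sum.distrib case_prod_beta Y Y')
qed

text \<open>This is where the constant \<open>9/10\<close> is needed: \<open>exp (1/10) - 1 \<le> 0.11\<close> and
  \<open>W \<le> 2.8 p Y\<^sup>2\<close>, while with \<open>x = 0.18 p Y / n \<le> 0.018\<close> we have \<open>1 - exp (- x) \<ge> x / 1.018\<close>
  and \<open>2 Y (n - Y) \<ge> 1.8 Y n\<close>; this gives \<open>0.308 p Y\<^sup>2\<close> against \<open>0.318 p Y\<^sup>2\<close>.\<close>
lemma drift_inequality:
  fixes p n Y X W :: real
  assumes p: "0 < p" "p \<le> 1" and n: "0 < n" and Y: "0 \<le> Y" "Y \<le> n / 10"
    and X: "X \<le> 9/10 * p * Y\<^sup>2 / n" and W: "W \<le> p * Y\<^sup>2 + 2 * X * n"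
  shows "(exp (1/10) - 1) * W \<le> (1 - exp (- (1/10 * (2 * (9/10 * p) * Y / n)))) * (2 * Y * (n - Y))"
proof -
  define x where "x = 9/50 * p * Y / n"
  have x0: "0 \<le> x" using p n Y by (simp add: x_def)
  have "p * Y \<le> 1 * (n / 10)" using p Y by (intro mult_mono) auto
  then have x1: "x \<le> 9/500" using n by (simp add: x_def field_simps)
  have "W \<le> 28/10 * p * Y\<^sup>2"
    using W X n by (simp add: field_simps)
  then have "(exp (1/10) - 1) * W \<le> (exp (1/10) - 1) * (28/10 * p * Y\<^sup>2)"
    by (rule mult_left_mono) simp
  also have "\<dots> \<le> 11/100 * (28/10 * p * Y\<^sup>2)"
    using exp_bound[of "1/10::real"] p by (intro mult_right_mono) (simp_all add: power2_eq_square)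
  also have "\<dots> \<le> x / (1 + 9/500) * (9/5 * Y * n)"
    using p n Y by (simp add: x_def field_simps power2_eq_square)
  also have "\<dots> \<le> (1 - exp (- x)) * (2 * Y * (n - Y))"
  proof (rule mult_mono)
    have "exp (- x) \<le> 1 / (1 + x)"
      using exp_ge_add_one_self[of x] x0 by (simp add: exp_minus field_simps)
    then have "x / (1 + x) \<le> 1 - exp (- x)" using x0 by (simp add: field_simps)
    moreover have "x / (1 + 9/500) \<le> x / (1 + x)" using x0 x1 by (intro divide_left_mono) auto
    ultimately show "x / (1 + 9/500) \<le> 1 - exp (- x)" by linarith
    have "Y * Y \<le> Y * (n / 10)" by (rule mult_left_mono) (use Y in simp_all)
    then show "9/5 * Y * n \<le> 2 * Y * (n - Y)" by (simp add: algebra_simps)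
  qed (use Y n x0 in auto)
  finally show ?thesis by (simp add: x_def)
qed

lemma trunc_potential_step_window:
  assumes n: "2 \<le> n" and p: "0 < p" "p \<le> 1"
    and c: "real n powr (-0.45) \<le> c_ge n m i" "c_ge n m i \<le> 1/10"
    and X: "count_nondrip n m D i \<le> 9/10 * p * (count_ge n m i)\<^sup>2 / real n"
  shows "(\<integral>\<^sup>+ s'. ennreal (trunc_potential n p i s') \<partial>clock_step n p i (m, D))
           \<le> ennreal (trunc_potential n p i (m, D))"
proof -
  define P where "P = potential n p i (m, D)"
  define B where "B = potential_decay n p i m"
  define R where "R = (\<lambda>(u, v). P * (1 + (exp (1/10) - 1) * nondrip_weight p i m D u v
                                    - B * crossing i m u v))"
  have n0: "0 < n" using n by simp
  have card: "0 < card (agent_pairs n)"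
    using agent_pairs_nonempty[OF n] finite_agent_pairs by (simp add: card_gt_0_iff)
  have R0: "0 \<le> R uv" for uv
  proof -
    obtain u v where uv: "uv = (u, v)" by fastforce
    have "B * crossing i m u v \<le> 1"
      using potential_decay_bounds[OF n0, of p i m] p
      by (intro mult_le_one) (auto simp: B_def crossing_def)
    moreover have "0 \<le> (exp (1/10) - 1) * nondrip_weight p i m D u v"
      using p by (simp add: nondrip_weight_def)
    ultimately show ?thesis
      using potential_pos[of n p i "(m, D)"] by (simp add: R_def P_def uv)
  qed
  have "(\<integral>\<^sup>+ s'. ennreal (trunc_potential n p i s') \<partial>clock_step n p i (m, D))
      = (\<Sum>(u, v)\<in>agent_pairs n. \<integral>\<^sup>+ s'. ennreal (trunc_potential n p i s') \<partial>clock_interact n p i m D u v)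
        / card (agent_pairs n)"
    using agent_pairs_nonempty[OF n] finite_agent_pairs
    by (simp add: clock_step_eq_bind nn_integral_pmf_of_set split_beta)
  also have "\<dots> \<le> (\<Sum>uv\<in>agent_pairs n. ennreal (R uv)) / card (agent_pairs n)"
    using nn_integral_trunc_potential_interact_le[OF _ _ p c]
    by (intro divide_right_mono_ennreal sum_mono)
      (auto simp: agent_pairs_def R_def P_def B_def)
  also have "\<dots> = ennreal (sum R (agent_pairs n) / card (agent_pairs n))"
    using R0 card by (simp add: sum_nonneg ennreal_of_nat_eq_real_of_nat divide_ennreal)
  also have "\<dots> \<le> ennreal P"
  proof (rule ennreal_leI)
    have Y: "count_ge n m i \<le> real n / 10" using c(2) n0 by (simp add: c_ge_eq_count_ge field_simps)
    have "(exp (1/10) - 1) * (\<Sum>(u, v)\<in>agent_pairs n. nondrip_weight p i m D u v)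
        \<le> B * (\<Sum>(u, v)\<in>agent_pairs n. crossing i m u v)"
      unfolding sum_crossing_eq B_def potential_decay_def
      using sum_nondrip_weight_le[where n = n and i = i and m = m and D = D] p n0
      by (intro drift_inequality[OF p _ count_ge_nonneg Y X]) auto
    then have "sum R (agent_pairs n) \<le> P * card (agent_pairs n)"
      using potential_pos[of n p i "(m, D)"]
      by (simp add: R_def P_def split_beta sum.distrib sum_subtractf sum_distrib_left
          flip: sum_distrib_left mult.assoc)
    then show "sum R (agent_pairs n) / card (agent_pairs n) \<le> P"
      using card by (simp add: divide_le_eq)
  qed
  finally show ?thesis
    by (simp add: P_def trunc_potential_eq_potential[OF n0 c])
qed

text \<open>Stated with \<open>9/20\<close>, the simp normal form of the literal \<open>0.45\<close>, so that it applies as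
  a rewrite rule after simplification.\<close>
lemma threshold_count_sq:
  assumes "0 < n"
  shows "(real n powr - (9/20) * real n)\<^sup>2 = real n powr (1/10) * real n"
proof -
  have "real n powr - (9/20) * real n = real n powr (11/20)"
    using assms by (simp add: powr_mult_base mult.commute)
  moreover have "real n powr (11/10) = real n powr (1/10) * real n"
    using powr_add[of "real n" "1/10" 1] assms by simp
  ultimately show ?thesis
    using assms by (simp add: power2_eq_square powr_add[symmetric])
qed

lemma trunc_potential_nondrip_zero_le:
  assumes "0 < n" "0 \<le> p" and "count_nondrip n m D i = 0"
  shows "trunc_potential n p i (m, D) \<le> exp (- (9/100 * p * real n powr (1/10)))"
proof -
  let ?Y0 = "real n powr (-0.45) * real n"
  have "?Y0\<^sup>2 \<le> (max (count_ge n m i) ?Y0)\<^sup>2" by (intro power_mono) auto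
  then have "9/10 * p * (?Y0\<^sup>2 / real n) \<le> 9/10 * p * ((max (count_ge n m i) ?Y0)\<^sup>2 / real n)"
    using assms(1,2) by (intro mult_left_mono divide_right_mono) auto
  then show ?thesis
    using assms by (simp add: trunc_potential_def threshold_count_sq)
qed

lemma trunc_potential_below_threshold:
  assumes "0 < n" and "count_nondrip n m D i = 0"
    and "c_ge n m i < real n powr (-0.45)" "c_ge n m i \<le> 1/10"
  shows "trunc_potential n p i (m, D) = exp (- (9/100 * p * real n powr (1/10)))"
proof -
  have "count_ge n m i \<le> real n powr (-0.45) * real n"
    using assms(1,3) by (simp add: c_ge_eq_count_ge field_simps)
  then show ?thesis
    using assms by (simp add: trunc_potential_def max_def threshold_count_sq)
qed

definition clock_excess :: "nat \<Rightarrow> real \<Rightarrow> nat \<Rightarrow> config \<Rightarrow> bool" where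
  "clock_excess n p i s = (case s of (m, D) \<Rightarrow>
     real n powr (-0.45) \<le> c_ge n m i \<and> c_ge n m i \<le> 1/10 \<and>
     9/10 * p * (count_ge n m i)\<^sup>2 / real n < count_nondrip n m D i)"

lemma one_le_trunc_potential_excess:
  assumes "0 < n" and "clock_excess n p i s"
  shows "1 \<le> trunc_potential n p i s"
proof -
  obtain m D where s: "s = (m, D)" by fastforce
  then have "trunc_potential n p i s = potential n p i (m, D)"
    using assms by (simp add: clock_excess_def trunc_potential_eq_potential)
  then show ?thesis using assms(2) by (simp add: s clock_excess_def potential_def)
qed

text \<open>Agents above minute \<open>i + 1\<close> are either early drip or counted by \<open>count_nondrip\<close>.\<close>
lemma clock_bad_imp_excess:
  assumes "0 < n" and "clock_bad n p i s"
  shows "clock_excess n p i s"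
proof -
  obtain m D where s: "s = (m, D)" by fastforce
  have sub: "{a. a < n \<and> Suc i \<le> m a} \<subseteq> {a. a < n \<and> i < m a \<and> \<not> D a} \<union> {a. a < n \<and> D a}"
    by auto
  have "card {a. a < n \<and> Suc i \<le> m a}
      \<le> card {a. a < n \<and> i < m a \<and> \<not> D a} + card {a. a < n \<and> D a}"
    by (rule order_trans[OF card_mono[OF _ sub] card_Un_le]) simp
  then have "c_ge n m (Suc i) \<le> count_nondrip n m D i / real n + d_frac n D"
    by (simp add: c_ge_def d_frac_def count_nondrip_def add_divide_distrib[symmetric]
        divide_right_mono flip: of_nat_add)
  moreover have "0.9 * p * (c_ge n m i)\<^sup>2 = 9/10 * p * (count_ge n m i)\<^sup>2 / real n / real n"
    by (simp add: c_ge_eq_count_ge power2_eq_square)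
  ultimately have "9/10 * p * (count_ge n m i)\<^sup>2 / real n / real n < count_nondrip n m D i / real n"
    using assms(2) by (simp add: s clock_bad_def)
  then have "9/10 * p * (count_ge n m i)\<^sup>2 / real n < count_nondrip n m D i"
    using assms(1) by (metis divide_less_cancel of_nat_0_less_iff)
  then show ?thesis
    using assms(2) by (simp add: s clock_bad_def clock_excess_def)
qed

lemma trunc_potential_step:
  assumes n: "2 \<le> n" and p: "0 < p" "p \<le> 1"
    and inv: "clock_inv n i (m, D)" and not_excess: "\<not> clock_excess n p i (m, D)"
  shows "(\<integral>\<^sup>+ s'. ennreal (trunc_potential n p i s') \<partial>clock_step n p i (m, D))
           \<le> ennreal (trunc_potential n p i (m, D))"
proof -
  have n0: "0 < n" using n by simp
  have outcome: "\<exists>u v. u < n \<and> v < n \<and> (m', D') \<in> set_pmf (clock_interact n p i m D u v)"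
    if "(m', D') \<in> set_pmf (clock_step n p i (m, D))" for m' D'
    using set_pmf_clock_step[OF that n] by metis
  consider (above) "1/10 < c_ge n m i"
    | (below) "c_ge n m i < real n powr (-0.45)" "c_ge n m i \<le> 1/10"
    | (window) "real n powr (-0.45) \<le> c_ge n m i" "c_ge n m i \<le> 1/10"
    by linarith
  then show ?thesis
  proof cases
    case above
    have "trunc_potential n p i (m', D') \<le> 0"
      if "(m', D') \<in> set_pmf (clock_step n p i (m, D))" for m' D'
      using outcome[OF that] c_ge_interact_mono above
      by (fastforce simp: trunc_potential_def)
    then have "(\<integral>\<^sup>+ s'. ennreal (trunc_potential n p i s') \<partial>clock_step n p i (m, D)) \<le> ennreal 0"
      by (intro nn_integral_pmf_le_const) auto
    then show ?thesis by simp
  next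
    case below
    have X: "count_nondrip n m D i = 0" using inv below by (simp add: clock_inv_def)
    have "trunc_potential n p i s' \<le> trunc_potential n p i (m, D)"
      if step: "s' \<in> set_pmf (clock_step n p i (m, D))" for s'
    proof -
      obtain m' D' where s': "s' = (m', D')" by fastforce
      then obtain u v where "u < n" "v < n" "(m', D') \<in> set_pmf (clock_interact n p i m D u v)"
        using outcome step by blast
      then have "count_nondrip n m' D' i = 0"
        using count_nondrip_interact_zero below(1) X by blast
      then show ?thesis
        unfolding s' trunc_potential_below_threshold[OF n0 X below]
        using trunc_potential_nondrip_zero_le n0 p by simp
    qed
    then show ?thesis by (rule nn_integral_pmf_le_const)
  next
    case window
    then have "count_nondrip n m D i \<le> 9/10 * p * (count_ge n m i)\<^sup>2 / real n"
      using not_excess by (auto simp: clock_excess_def)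
    then show ?thesis by (rule trunc_potential_step_window[OF n p window])
  qed
qed

definition stopped_potential :: "nat \<Rightarrow> real \<Rightarrow> nat \<Rightarrow> config list \<Rightarrow> real" where
  "stopped_potential n p i xs =
     (if \<exists>x\<in>set xs. clock_excess n p i x then 1 else trunc_potential n p i (last xs))"

lemma stopped_potential_step:
  assumes n: "2 \<le> n" and p: "0 < p" "p \<le> 1"
    and "xs \<noteq> []" and "clock_inv n i (last xs)"
  shows "(\<integral>\<^sup>+ s'. ennreal (stopped_potential n p i (xs @ [s'])) \<partial>clock_step n p i (last xs))
           \<le> ennreal (stopped_potential n p i xs)"
proof (cases "\<exists>x\<in>set xs. clock_excess n p i x")
  case True
  then show ?thesis
    by (simp add: stopped_potential_def nn_integral_pmf_le_const)
next
  case False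
  obtain m D where last: "last xs = (m, D)" by fastforce
  have "\<not> clock_excess n p i (m, D)"
    using False last last_in_set[OF assms(4)] by metis
  have "(\<integral>\<^sup>+ s'. ennreal (stopped_potential n p i (xs @ [s'])) \<partial>clock_step n p i (last xs))
      \<le> (\<integral>\<^sup>+ s'. ennreal (trunc_potential n p i s') \<partial>clock_step n p i (last xs))"
    using False one_le_trunc_potential_excess[of n p i] n
    by (intro nn_integral_mono ennreal_leI) (auto simp: stopped_potential_def)
  also have "\<dots> \<le> ennreal (trunc_potential n p i (m, D))"
    unfolding last using n p assms(5) last \<open>\<not> clock_excess n p i (m, D)\<close>
    by (intro trunc_potential_step) auto
  finally show ?thesis using False last by (simp add: stopped_potential_def)
qed

lemma nn_integral_stopped_potential_le:
  assumes n: "2 \<le> n" and p: "0 < p" "p \<le> 1"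
  shows "(\<integral>\<^sup>+ xs. ennreal (stopped_potential n p i xs) \<partial>clock_run n p i k)
           \<le> ennreal (trunc_potential n p i clock_init)"
proof (induction k)
  case 0
  have "\<not> clock_excess n p i clock_init"
    using p by (simp add: clock_excess_def clock_init_def count_nondrip_def not_less)
  then show ?case by (simp add: stopped_potential_def)
next
  case (Suc k)
  have "(\<integral>\<^sup>+ xs. ennreal (stopped_potential n p i xs) \<partial>clock_run n p i (Suc k))
      = (\<integral>\<^sup>+ xs. \<integral>\<^sup>+ s'. ennreal (stopped_potential n p i (xs @ [s'])) \<partial>clock_step n p i (last xs)
           \<partial>clock_run n p i k)"
    by simp
  also have "\<dots> \<le> (\<integral>\<^sup>+ xs. ennreal (stopped_potential n p i xs) \<partial>clock_run n p i k)"
    using stopped_potential_step[OF n p] clock_run_inv[OF n]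
    by (intro nn_integral_mono_AE) (auto simp: AE_measure_pmf_iff)
  finally show ?case using Suc.IH by (rule order_trans)
qed

lemma prob_clock_bad_le:
  assumes n: "2 \<le> n" and p: "0 < p" "p \<le> 1"
  shows "measure_pmf.prob (clock_run n p i k) {xs. \<exists>t < length xs. clock_bad n p i (xs ! t)}
           \<le> exp (- (9/100 * p * real n powr (1/10)))"
proof -
  let ?A = "{xs. \<exists>t < length xs. clock_bad n p i (xs ! t)}"
  have n0: "0 < n" using n by simp
  have ind: "indicator ?A xs \<le> ennreal (stopped_potential n p i xs)" for xs
  proof (cases "xs \<in> ?A")
    case True
    then have "\<exists>x\<in>set xs. clock_excess n p i x"
      using clock_bad_imp_excess[OF n0] nth_mem by blast
    then show ?thesis using True by (simp add: stopped_potential_def)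
  qed simp
  have "emeasure (clock_run n p i k) ?A = (\<integral>\<^sup>+ xs. indicator ?A xs \<partial>clock_run n p i k)"
    by simp
  also have "\<dots> \<le> (\<integral>\<^sup>+ xs. ennreal (stopped_potential n p i xs) \<partial>clock_run n p i k)"
    using ind by (rule nn_integral_mono)
  also have "\<dots> \<le> ennreal (trunc_potential n p i clock_init)"
    by (rule nn_integral_stopped_potential_le[OF n p])
  also have "\<dots> \<le> ennreal (exp (- (9/100 * p * real n powr (1/10))))"
    using p unfolding clock_init_def
    by (intro ennreal_leI trunc_potential_nondrip_zero_le[OF n0]) (auto simp: count_nondrip_def)
  finally show ?thesis by (simp add: measure_pmf.emeasure_eq_measure)
qed

theorem mainTheorem1:
  fixes p :: real
  assumes "0 < p" and "p \<le> 1"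
  shows "\<forall>K::nat. \<forall>C::real. C > 0 \<longrightarrow>
           (\<forall>\<^sub>F n in sequentially. \<forall>i::nat.
              measure_pmf.prob (clock_run n p i (n ^ K))
                {xs. \<exists>t < length xs. clock_bad n p i (xs ! t)} \<le> real n powr (- C))"
proof (intro allI impI)
  fix K :: nat and C :: real
  assume "C > 0"
  then have "\<forall>\<^sub>F n in sequentially. exp (- (9/100 * p * real n powr (1/10))) \<le> real n powr (- C)"
    using assms(1) by real_asymp
  moreover have "\<forall>\<^sub>F n in sequentially. 2 \<le> n"
    by (rule eventually_ge_at_top)
  ultimately show "\<forall>\<^sub>F n in sequentially. \<forall>i.
      measure_pmf.prob (clock_run n p i (n ^ K))
        {xs. \<exists>t < length xs. clock_bad n p i (xs ! t)} \<le> real n powr (- C)"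
    by eventually_elim (use prob_clock_bad_le[OF _ assms] in \<open>blast intro: order_trans\<close>)
qed

end
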